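(* Consider two hypotheses $\mathrm{H}_0,\mathrm{H}_1$ with prior probabilities $P(\mathrm{H}_0),P(\mathrm{H}_1)$, where under $\mathrm{H}_i$ the parameter is restricted to a grid $\theta_i^{[1]},\dots,\theta_i^{[N_i]}$ with spacing $\Delta\theta_i$ and prior weights $p(\theta_i^{[n]}\mid\mathrm{H}_i)\Delta\theta_i$, and for each grid point the conditional density of $\mathbf{X}$ lies in a convex uncertainty set $\mathcal{P}_{i,\theta_i^{[n]}}$; let $\mathbb{P}_i=\prod_{n=1}^{N_i}\mathcal{P}_{i,\theta_i^{[n]}}$. For given $\lambda_i,\mu_i\ge0$, $i\in\{0,1\}$, the least favorable distributions maximizing the cost $J^{\mathrm{NP}}_{\mathrm u}=\sum_{i=0}^1P(\mathrm{H}_i)\bigl(\lambda_i\alpha_i(\pi,\boldsymbol p^{\mathrm D}_i)+\mu_i\beta_i(\pi,\boldsymbol p^{\mathrm E}_i)\bigr)$ (over four vectors of distributions $\boldsymbol P^{\mathrm D}_0,\boldsymbol P^{\mathrm E}_0\in\mathbb{P}_0$, $\boldsymbol P^{\mathrm D}_1,\boldsymbol P^{\mathrm E}_1\in\mathbb{P}_1$) are given by $$\boldsymbol Q=(\boldsymbol Q^{\mathrm D}_0,\boldsymbol Q^{\mathrm D}_1,\boldsymbol Q^{\mathrm E}_0,\boldsymbol Q^{\mathrm E}_1)=\operatorname*{arg\,max}_{\boldsymbol P^{\mathrm D}_0,\boldsymbol P^{\mathrm E}_0\in\mathbb{P}_0,\ \boldsymbol P^{\mathrm D}_1,\boldsymbol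 P^{\mathrm E}_1\in\mathbb{P}_1}D_{\rho^{\mathrm{NP}}}(\boldsymbol P^{\mathrm D}_0,\boldsymbol P^{\mathrm D}_1,\boldsymbol P^{\mathrm E}_0,\boldsymbol P^{\mathrm E}_1),$$ where $D_{\rho^{\mathrm{NP}}}(\boldsymbol P^{\mathrm D}_0,\boldsymbol P^{\mathrm D}_1,\boldsymbol P^{\mathrm E}_0,\boldsymbol P^{\mathrm E}_1)=\int\rho^{\mathrm{NP}}(\boldsymbol p^{\mathrm D}_0(\mathbf{x}),\boldsymbol p^{\mathrm D}_1(\mathbf{x}),\boldsymbol p^{\mathrm E}_0(\mathbf{x}),\boldsymbol p^{\mathrm E}_1(\mathbf{x}))\,\mathrm{d}\mathbf{x}$ is the $f$-similarity induced by $\rho^{\mathrm{NP}}=\min\{\tilde D_0^{\mathrm{NP}},\tilde D_1^{\mathrm{NP}}\}$ with $$\tilde D_i^{\mathrm{NP}}(\boldsymbol s^{\mathrm D}_0,\boldsymbol s^{\mathrm D}_1,\boldsymbol s^{\mathrm E}_0,\boldsymbol s^{\mathrm E}_1)=\mu_iP(\mathrm{H}_i)\boldsymbol a_i^\top\boldsymbol s^{\mathrm E}_i-\mu_iP(\mathrm{H}_i)\frac{(\boldsymbol b_i^\top\boldsymbol s^{\mathrm E}_i)^2}{\boldsymbol c_i^\top\boldsymbol s^{\mathrm E}_i}+\lambda_{1-i}P(\mathrm{H}_{1-i})\boldsymbol c_{1-i}^\top\boldsymbol s^{\mathrm D}_{1-i},$$ $[\boldsymbol a_i]_n=(\theta_i^{[n]})^2p(\theta_i^{[n]}\mid\mathrm{H}_i)\Delta\theta_i$,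 $[\boldsymbol b_i]_n=\theta_i^{[n]}p(\theta_i^{[n]}\mid\mathrm{H}_i)\Delta\theta_i$, $[\boldsymbol c_i]_n=p(\theta_i^{[n]}\mid\mathrm{H}_i)\Delta\theta_i$.
   Context: A policy $\pi=(\delta,\hat\theta_0,\hat\theta_1)$ consists of a randomized decision rule $\delta$ with values in $[0,1]$ (probability of accepting $\mathrm{H}_1$) and estimators $\hat\theta_i$. Here $\boldsymbol p^{\mathrm D}_i=(p^{\mathrm D}_{i,\theta_i^{[1]}},\dots,p^{\mathrm D}_{i,\theta_i^{[N_i]}})$ and similarly $\boldsymbol p^{\mathrm E}_i$ are vectors of conditional densities with distributions $\boldsymbol P^{\mathrm D}_i,\boldsymbol P^{\mathrm E}_i$. With parameter integrals replaced by grid sums: $\alpha_0=\mathbb{E}[\delta\mid\mathrm{H}_0]$, $\alpha_1=\mathbb{E}[1-\delta\mid\mathrm{H}_1]$ computed with $\boldsymbol p^{\mathrm D}_i$; $\beta_0=\mathbb{E}[(1-\delta)(\hat\theta_0-\Theta_0)^2\mid\mathrm{H}_0]$, $\beta_1=\mathbb{E}[\delta(\hat\theta_1-\Theta_1)^2\mid\mathrm{H}_1]$ computed with $\boldsymbol p^{\mathrm E}_i$. "Least favorable" means maximizing the cost attained by the cost-minimizing policy, i.e. maximizing $\min_\pi J^{\mathrm{NP}}_{\mathrm u}$. For a continuous, concave, positively homogeneous function $f$ on $\mathbb{R}^N_{\ge0}$ and distributions with densities $p_1,\dots,p_N$, the $f$-similarity is $D_f=\int f(p_1(\mathbf{x}),\dots,p_N(\mathbf{x}))\,\mathrm{d}\mathbf{x}$.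 *)

theory Defs
  imports "HOL-Analysis.Analysis"
begin

text \<open>Hypothesis index i ranges over {0,1} (type nat).
  N i = number of grid points under H_i; th i n = grid point theta_i^[n] (n < N i);
  pr i n = prior density value p(theta_i^[n] | H_i); Dl i = grid spacing;
  PH i = prior probability P(H_i); lam i, mu i = cost weights. A vector of densities under H_i is P i n (n < N i).\<close>

definition is_density :: "('a::euclidean_space \<Rightarrow> real) \<Rightarrow> bool" where
  "is_density p \<longleftrightarrow> p \<in> borel_measurable lborel \<and> (\<forall>x. 0 \<le> p x)
      \<and> integrable lborel p \<and> integral\<^sup>L lborel p = 1"

definition convex_fun_set :: "('a \<Rightarrow> real) set \<Rightarrow> bool" where
  "convex_fun_set S \<longleftrightarrow>
     (\<forall>p\<in>S. \<forall>q\<in>S. \<forall>t::real. 0 \<le> t \<and> t \<le> 1 \<longrightarrow> (\<lambda>x. t * p x + (1 - t) * q x) \<in> S)"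

definition avec :: "(nat \<Rightarrow> nat \<Rightarrow> real) \<Rightarrow> (nat \<Rightarrow> nat \<Rightarrow> real) \<Rightarrow> (nat \<Rightarrow> real) \<Rightarrow> nat \<Rightarrow> nat \<Rightarrow> real" where
  "avec th pr Dl i n = (th i n)\<^sup>2 * pr i n * Dl i"

definition bvec :: "(nat \<Rightarrow> nat \<Rightarrow> real) \<Rightarrow> (nat \<Rightarrow> nat \<Rightarrow> real) \<Rightarrow> (nat \<Rightarrow> real) \<Rightarrow> nat \<Rightarrow> nat \<Rightarrow> real" where
  "bvec th pr Dl i n = th i n * pr i n * Dl i"

definition cvec :: "(nat \<Rightarrow> nat \<Rightarrow> real) \<Rightarrow> (nat \<Rightarrow> real) \<Rightarrow> nat \<Rightarrow> nat \<Rightarrow> real" where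
  "cvec pr Dl i n = pr i n * Dl i"

text \<open>Probability of accepting H_1 is d x. "Decision for H_i" indicator: g i x.\<close>
definition acc :: "('a \<Rightarrow> real) \<Rightarrow> nat \<Rightarrow> 'a \<Rightarrow> real" where
  "acc d i x = (if i = 0 then d x else 1 - d x)"

definition alpha_err ::
  "(nat \<Rightarrow> nat) \<Rightarrow> (nat \<Rightarrow> nat \<Rightarrow> real) \<Rightarrow> (nat \<Rightarrow> real) \<Rightarrow> ('a::euclidean_space \<Rightarrow> real)
     \<Rightarrow> (nat \<Rightarrow> nat \<Rightarrow> 'a \<Rightarrow> real) \<Rightarrow> nat \<Rightarrow> real" where
  "alpha_err N pr Dl d PD i =
     (\<Sum>n<N i. cvec pr Dl i n * (LINT x|lborel. acc d i x * PD i n x))"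

definition beta_err ::
  "(nat \<Rightarrow> nat) \<Rightarrow> (nat \<Rightarrow> nat \<Rightarrow> real) \<Rightarrow> (nat \<Rightarrow> nat \<Rightarrow> real) \<Rightarrow> (nat \<Rightarrow> real)
     \<Rightarrow> ('a::euclidean_space \<Rightarrow> real) \<Rightarrow> (nat \<Rightarrow> 'a \<Rightarrow> real)
     \<Rightarrow> (nat \<Rightarrow> nat \<Rightarrow> 'a \<Rightarrow> real) \<Rightarrow> nat \<Rightarrow> real" where
  "beta_err N th pr Dl d est PE i =
     (\<Sum>n<N i. cvec pr Dl i n *
        (LINT x|lborel. (1 - acc d i x) * (est i x - th i n)\<^sup>2 * PE i n x))"

definition J_NP ::
  "(nat \<Rightarrow> nat) \<Rightarrow> (nat \<Rightarrow> nat \<Rightarrow> real) \<Rightarrow> (nat \<Rightarrow> nat \<Rightarrow> real) \<Rightarrow> (nat \<Rightarrow> real)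
     \<Rightarrow> (nat \<Rightarrow> real) \<Rightarrow> (nat \<Rightarrow> real) \<Rightarrow> (nat \<Rightarrow> real)
     \<Rightarrow> ('a::euclidean_space \<Rightarrow> real) \<Rightarrow> (nat \<Rightarrow> 'a \<Rightarrow> real)
     \<Rightarrow> (nat \<Rightarrow> nat \<Rightarrow> 'a \<Rightarrow> real) \<Rightarrow> (nat \<Rightarrow> nat \<Rightarrow> 'a \<Rightarrow> real) \<Rightarrow> real" where
  "J_NP N th pr Dl PH lam mu d est PD PE =
     (\<Sum>i<2. PH i * (lam i * alpha_err N pr Dl d PD i + mu i * beta_err N th pr Dl d est PE i))"

definition admissible ::
  "(nat \<Rightarrow> nat) \<Rightarrow> (nat \<Rightarrow> nat \<Rightarrow> real) \<Rightarrow> (nat \<Rightarrow> nat \<Rightarrow> 'a \<Rightarrow> real) \<Rightarrow> (nat \<Rightarrow> nat \<Rightarrow> 'a \<Rightarrow> real)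
     \<Rightarrow> ('a::euclidean_space \<Rightarrow> real) \<Rightarrow> (nat \<Rightarrow> 'a \<Rightarrow> real) \<Rightarrow> bool" where
  "admissible N th PD PE d est \<longleftrightarrow>
     d \<in> borel_measurable lborel \<and> (\<forall>x. 0 \<le> d x \<and> d x \<le> 1) \<and>
     (\<forall>i<2. est i \<in> borel_measurable lborel) \<and>
     (\<forall>i<2. \<forall>n<N i. integrable lborel (\<lambda>x. acc d i x * PD i n x)) \<and>
     (\<forall>i<2. \<forall>n<N i. integrable lborel (\<lambda>x. (1 - acc d i x) * (est i x - th i n)\<^sup>2 * PE i n x))"

definition J_min ::
  "(nat \<Rightarrow> nat) \<Rightarrow> (nat \<Rightarrow> nat \<Rightarrow> real) \<Rightarrow> (nat \<Rightarrow> nat \<Rightarrow> real) \<Rightarrow> (nat \<Rightarrow> real)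
     \<Rightarrow> (nat \<Rightarrow> real) \<Rightarrow> (nat \<Rightarrow> real) \<Rightarrow> (nat \<Rightarrow> real)
     \<Rightarrow> (nat \<Rightarrow> nat \<Rightarrow> 'a::euclidean_space \<Rightarrow> real) \<Rightarrow> (nat \<Rightarrow> nat \<Rightarrow> 'a \<Rightarrow> real) \<Rightarrow> real" where
  "J_min N th pr Dl PH lam mu PD PE =
     (INF p \<in> {(d, est). admissible N th PD PE d est}.
        J_NP N th pr Dl PH lam mu (fst p) (snd p) PD PE)"

text \<open>tilde D_i^NP evaluated at vectors sD, sE (sD i n = [s^D_i]_n).\<close>
definition Dtil ::
  "(nat \<Rightarrow> nat) \<Rightarrow> (nat \<Rightarrow> nat \<Rightarrow> real) \<Rightarrow> (nat \<Rightarrow> nat \<Rightarrow> real) \<Rightarrow> (nat \<Rightarrow> real)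
     \<Rightarrow> (nat \<Rightarrow> real) \<Rightarrow> (nat \<Rightarrow> real) \<Rightarrow> (nat \<Rightarrow> real)
     \<Rightarrow> nat \<Rightarrow> (nat \<Rightarrow> nat \<Rightarrow> real) \<Rightarrow> (nat \<Rightarrow> nat \<Rightarrow> real) \<Rightarrow> real" where
  "Dtil N th pr Dl PH lam mu i sD sE =
     mu i * PH i * (\<Sum>n<N i. avec th pr Dl i n * sE i n)
     - mu i * PH i * (\<Sum>n<N i. bvec th pr Dl i n * sE i n)\<^sup>2
                    / (\<Sum>n<N i. cvec pr Dl i n * sE i n)
     + lam (1 - i) * PH (1 - i) * (\<Sum>n<N (1 - i). cvec pr Dl (1 - i) n * sD (1 - i) n)"

definition rho_NP ::
  "(nat \<Rightarrow> nat) \<Rightarrow> (nat \<Rightarrow> nat \<Rightarrow> real) \<Rightarrow> (nat \<Rightarrow> nat \<Rightarrow> real) \<Rightarrow> (nat \<Rightarrow> real)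
     \<Rightarrow> (nat \<Rightarrow> real) \<Rightarrow> (nat \<Rightarrow> real) \<Rightarrow> (nat \<Rightarrow> real)
     \<Rightarrow> (nat \<Rightarrow> nat \<Rightarrow> real) \<Rightarrow> (nat \<Rightarrow> nat \<Rightarrow> real) \<Rightarrow> real" where
  "rho_NP N th pr Dl PH lam mu sD sE =
     min (Dtil N th pr Dl PH lam mu 0 sD sE) (Dtil N th pr Dl PH lam mu 1 sD sE)"

definition D_rho_NP ::
  "(nat \<Rightarrow> nat) \<Rightarrow> (nat \<Rightarrow> nat \<Rightarrow> real) \<Rightarrow> (nat \<Rightarrow> nat \<Rightarrow> real) \<Rightarrow> (nat \<Rightarrow> real)
     \<Rightarrow> (nat \<Rightarrow> real) \<Rightarrow> (nat \<Rightarrow> real) \<Rightarrow> (nat \<Rightarrow> real)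
     \<Rightarrow> (nat \<Rightarrow> nat \<Rightarrow> 'a::euclidean_space \<Rightarrow> real) \<Rightarrow> (nat \<Rightarrow> nat \<Rightarrow> 'a \<Rightarrow> real) \<Rightarrow> real" where
  "D_rho_NP N th pr Dl PH lam mu PD PE =
     (LINT x|lborel. rho_NP N th pr Dl PH lam mu (\<lambda>i n. PD i n x) (\<lambda>i n. PE i n x))"

definition in_unc ::
  "(nat \<Rightarrow> nat) \<Rightarrow> (nat \<Rightarrow> nat \<Rightarrow> ('a \<Rightarrow> real) set)
     \<Rightarrow> (nat \<Rightarrow> nat \<Rightarrow> 'a \<Rightarrow> real) \<Rightarrow> (nat \<Rightarrow> nat \<Rightarrow> 'a \<Rightarrow> real) \<Rightarrow> bool" where
  "in_unc N U PD PE \<longleftrightarrow> (\<forall>i<2. \<forall>n<N i. PD i n \<in> U i n \<and> PE i n \<in> U i n)"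

end

theory Submission
  imports Defs
begin

(* Given X = x, the cost of a policy is affine in the decision probability delta(x):
   accepting H_1 costs the H_0 false-alarm density plus the H_1 squared estimation
   error, rejecting it the converse.  For either decision the squared error is minimised
   by the posterior mean, whose residual is exactly the quadratic part of tilde D_i, so
   the pointwise optimum over delta(x) in [0,1] is min(tilde D_0, tilde D_1) = rho.
   The resulting Bayes policy is admissible (its estimators are convex combinations of
   grid points, hence bounded), so the minimal cost equals the f-similarity D_rho for
   every choice of densities, and the two maximisation problems coincide. *)

lemma integrable_bounded_mult:
  fixes f g :: "'a \<Rightarrow> real"
  assumes "integrable M f" "g \<in> borel_measurable M" "\<And>x. x \<in> space M \<Longrightarrow> \<bar>g x\<bar> \<le> B"
  shows "integrable M (\<lambda>x. g x * f x)"
proof (rule Bochner_Integration.integrable_bound[OF integrable_mult_right[OF assms(1), of B]])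
  show "(\<lambda>x. g x * f x) \<in> borel_measurable M"
    using assms by measurable
  have "\<bar>g x\<bar> * \<bar>f x\<bar> \<le> \<bar>B\<bar> * \<bar>f x\<bar>" if "x \<in> space M" for x
    using assms(3)[OF that] by (intro mult_right_mono) auto
  then show "AE x in M. norm (g x * f x) \<le> norm (B * f x)"
    by (auto simp: abs_mult)
qed

lemma sum_weighted_sq_dev_expand:
  fixes w t :: "'b \<Rightarrow> real" and A :: "'b set"
  shows "(\<Sum>a\<in>A. w a * (e - t a)\<^sup>2)
    = e\<^sup>2 * (\<Sum>a\<in>A. w a) - 2 * e * (\<Sum>a\<in>A. w a * t a) + (\<Sum>a\<in>A. w a * (t a)\<^sup>2)"
  by (simp add: power2_diff sum.distrib sum_subtractf sum_distrib_left sum_distrib_right algebra_simps)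

lemma sum_weighted_sq_dev_at_mean:
  fixes w t :: "'b \<Rightarrow> real" and A :: "'b set"
  defines "m \<equiv> (\<Sum>a\<in>A. w a * t a) / (\<Sum>a\<in>A. w a)"
  shows "(\<Sum>a\<in>A. w a * (m - t a)\<^sup>2) = (\<Sum>a\<in>A. w a * (t a)\<^sup>2) - (\<Sum>a\<in>A. w a * t a)\<^sup>2 / (\<Sum>a\<in>A. w a)"
proof (cases "(\<Sum>a\<in>A. w a) = 0")
  case True
  then show ?thesis unfolding m_def by (simp add: sum_weighted_sq_dev_expand)
next
  case False
  then show ?thesis unfolding m_def sum_weighted_sq_dev_expand
    by (simp add: field_simps power2_eq_square)
qed

lemma sum_weighted_sq_dev_mean_le:
  fixes w t :: "'b \<Rightarrow> real" and A :: "'b set"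
  assumes "finite A" and w_nonneg: "\<And>a. a \<in> A \<Longrightarrow> 0 \<le> w a"
  defines "m \<equiv> (\<Sum>a\<in>A. w a * t a) / (\<Sum>a\<in>A. w a)"
  shows "(\<Sum>a\<in>A. w a * (m - t a)\<^sup>2) \<le> (\<Sum>a\<in>A. w a * (e - t a)\<^sup>2)"
proof (cases "(\<Sum>a\<in>A. w a) = 0")
  case True
  then have "\<forall>a\<in>A. w a = 0"
    using assms by (simp add: sum_nonneg_eq_0_iff)
  then show ?thesis by simp
next
  case False
  have "(\<Sum>a\<in>A. w a * (e - t a)\<^sup>2) = (\<Sum>a\<in>A. w a * (m - t a)\<^sup>2) + (\<Sum>a\<in>A. w a) * (e - m)\<^sup>2"
    using False unfolding m_def sum_weighted_sq_dev_expand
    by (simp add: field_simps power2_eq_square)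
  moreover have "0 \<le> (\<Sum>a\<in>A. w a)"
    using w_nonneg by (simp add: sum_nonneg)
  ultimately show ?thesis by simp
qed

lemma weighted_mean_abs_le:
  fixes w t :: "'b \<Rightarrow> real" and A :: "'b set"
  assumes w_nonneg: "\<And>a. a \<in> A \<Longrightarrow> 0 \<le> w a" and t_bound: "\<And>a. a \<in> A \<Longrightarrow> \<bar>t a\<bar> \<le> B"
    and "0 \<le> B"
  shows "\<bar>(\<Sum>a\<in>A. w a * t a) / (\<Sum>a\<in>A. w a)\<bar> \<le> B"
proof -
  have W_nonneg: "0 \<le> (\<Sum>a\<in>A. w a)"
    using w_nonneg by (simp add: sum_nonneg)
  have "\<bar>\<Sum>a\<in>A. w a * t a\<bar> \<le> (\<Sum>a\<in>A. w a * B)"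
    using sum_abs[of "\<lambda>a. w a * t a" A] sum_mono[of A "\<lambda>a. \<bar>w a * t a\<bar>" "\<lambda>a. w a * B"]
      w_nonneg t_bound by (force simp: abs_mult intro: mult_left_mono)
  also have "\<dots> = B * (\<Sum>a\<in>A. w a)"
    by (simp add: sum_distrib_left mult.commute)
  finally show ?thesis
    using \<open>0 \<le> B\<close> W_nonneg by (cases "(\<Sum>a\<in>A. w a) = 0") (auto simp: abs_div divide_le_eq)
qed

locale grid_cost =
  fixes N :: "nat \<Rightarrow> nat" and th pr :: "nat \<Rightarrow> nat \<Rightarrow> real" and Dl PH lam mu :: "nat \<Rightarrow> real"
  assumes PH_nonneg: "i < 2 \<Longrightarrow> 0 \<le> PH i" and mu_nonneg: "i < 2 \<Longrightarrow> 0 \<le> mu i"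
    and Dl_nonneg: "i < 2 \<Longrightarrow> 0 \<le> Dl i" and prior_nonneg: "i < 2 \<Longrightarrow> n < N i \<Longrightarrow> 0 \<le> pr i n"
begin

lemma cvec_nonneg: "i < 2 \<Longrightarrow> n < N i \<Longrightarrow> 0 \<le> cvec pr Dl i n"
  unfolding cvec_def using Dl_nonneg prior_nonneg by simp

definition marginal :: "(nat \<Rightarrow> nat \<Rightarrow> real) \<Rightarrow> nat \<Rightarrow> real" where
  "marginal s i = (\<Sum>n<N i. cvec pr Dl i n * s i n)"

definition post_mean :: "(nat \<Rightarrow> nat \<Rightarrow> real) \<Rightarrow> nat \<Rightarrow> real" where
  "post_mean s i = (\<Sum>n<N i. cvec pr Dl i n * s i n * th i n) / marginal s i"

definition sq_err :: "(nat \<Rightarrow> nat \<Rightarrow> real) \<Rightarrow> nat \<Rightarrow> real \<Rightarrow> real" where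
  "sq_err s i e = (\<Sum>n<N i. cvec pr Dl i n * s i n * (e - th i n)\<^sup>2)"

definition risk :: "real \<Rightarrow> (nat \<Rightarrow> real) \<Rightarrow> (nat \<Rightarrow> nat \<Rightarrow> real) \<Rightarrow> (nat \<Rightarrow> nat \<Rightarrow> real) \<Rightarrow> real" where
  "risk \<delta> e sD sE =
     \<delta> * (lam 0 * PH 0 * marginal sD 0 + mu 1 * PH 1 * sq_err sE 1 (e 1))
     + (1 - \<delta>) * (lam 1 * PH 1 * marginal sD 1 + mu 0 * PH 0 * sq_err sE 0 (e 0))"

lemma Dtil_eq_sq_err_post_mean:
  "Dtil N th pr Dl PH lam mu i sD sE
     = mu i * PH i * sq_err sE i (post_mean sE i) + lam (1 - i) * PH (1 - i) * marginal sD (1 - i)"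
proof -
  have "sq_err sE i (post_mean sE i)
    = (\<Sum>n<N i. cvec pr Dl i n * sE i n * (th i n)\<^sup>2)
      - (\<Sum>n<N i. cvec pr Dl i n * sE i n * th i n)\<^sup>2 / marginal sE i"
    using sum_weighted_sq_dev_at_mean[of "\<lambda>n. cvec pr Dl i n * sE i n" "th i" "{..<N i}"]
    unfolding sq_err_def post_mean_def marginal_def .
  moreover have "(\<Sum>n<N i. avec th pr Dl i n * sE i n) = (\<Sum>n<N i. cvec pr Dl i n * sE i n * (th i n)\<^sup>2)"
    and "(\<Sum>n<N i. bvec th pr Dl i n * sE i n) = (\<Sum>n<N i. cvec pr Dl i n * sE i n * th i n)"
    unfolding avec_def bvec_def cvec_def by (simp_all add: ac_simps)
  ultimately show ?thesis
    unfolding Dtil_def marginal_def by (simp add: right_diff_distrib)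
qed

lemma sq_err_post_mean_le:
  assumes "i < 2" and "\<And>n. n < N i \<Longrightarrow> 0 \<le> s i n"
  shows "sq_err s i (post_mean s i) \<le> sq_err s i e"
  using sum_weighted_sq_dev_mean_le[of "{..<N i}" "\<lambda>n. cvec pr Dl i n * s i n" "th i" e]
    assms cvec_nonneg
  unfolding sq_err_def post_mean_def marginal_def by simp

lemma risk_post_mean:
  "risk \<delta> (post_mean sE) sD sE
     = \<delta> * Dtil N th pr Dl PH lam mu 1 sD sE + (1 - \<delta>) * Dtil N th pr Dl PH lam mu 0 sD sE"
  unfolding risk_def Dtil_eq_sq_err_post_mean by (simp add: algebra_simps)

lemma rho_NP_le_risk:
  assumes "0 \<le> \<delta>" "\<delta> \<le> 1" and sE_nonneg: "\<And>i n. i < 2 \<Longrightarrow> n < N i \<Longrightarrow> 0 \<le> sE i n"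
  shows "rho_NP N th pr Dl PH lam mu sD sE \<le> risk \<delta> e sD sE"
proof -
  have "mu i * PH i * sq_err sE i (post_mean sE i) \<le> mu i * PH i * sq_err sE i (e i)"
    if "i < 2" for i
    using that sE_nonneg mu_nonneg PH_nonneg by (intro mult_left_mono sq_err_post_mean_le) auto
  then have "risk \<delta> (post_mean sE) sD sE \<le> risk \<delta> e sD sE"
    unfolding risk_def using assms
    by (auto intro!: add_mono mult_left_mono[of _ _ \<delta>] mult_left_mono[of _ _ "1 - \<delta>"])
  moreover have "min a b \<le> \<delta> * b + (1 - \<delta>) * a" for a b :: real
  proof -
    have "\<delta> * min a b \<le> \<delta> * b" "(1 - \<delta>) * min a b \<le> (1 - \<delta>) * a"
      using assms by (simp_all add: mult_left_mono)
    then show ?thesis by (simp add: algebra_simps)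
  qed
  ultimately show ?thesis
    unfolding rho_NP_def risk_post_mean by (meson order_trans)
qed

lemma risk_eq_sum:
  "risk (d x) (\<lambda>i. est i x) (\<lambda>i n. PD i n x) (\<lambda>i n. PE i n x)
   = (\<Sum>i<2. PH i * (lam i * (\<Sum>n<N i. cvec pr Dl i n * (acc d i x * PD i n x))
       + mu i * (\<Sum>n<N i. cvec pr Dl i n * ((1 - acc d i x) * (est i x - th i n)\<^sup>2 * PE i n x))))"
  unfolding risk_def marginal_def sq_err_def acc_def numeral_2_eq_2
  by (simp add: sum_distrib_left algebra_simps)

lemma J_NP_eq_integral_risk:
  assumes "admissible N th PD PE d est"
  shows "integrable lborel (\<lambda>x. risk (d x) (\<lambda>i. est i x) (\<lambda>i n. PD i n x) (\<lambda>i n. PE i n x))"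
    and "J_NP N th pr Dl PH lam mu d est PD PE
      = (LINT x|lborel. risk (d x) (\<lambda>i. est i x) (\<lambda>i n. PD i n x) (\<lambda>i n. PE i n x))"
proof -
  have int_D: "integrable lborel (\<lambda>x. acc d i x * PD i n x)"
    and int_E: "integrable lborel (\<lambda>x. (1 - acc d i x) * (est i x - th i n)\<^sup>2 * PE i n x)"
    if "i \<in> {..<2}" "n \<in> {..<N i}" for i n
    using assms that unfolding admissible_def by auto
  have int_SD: "integrable lborel (\<lambda>x. \<Sum>n<N i. cvec pr Dl i n * (acc d i x * PD i n x))"
    and int_SE: "integrable lborel
      (\<lambda>x. \<Sum>n<N i. cvec pr Dl i n * ((1 - acc d i x) * (est i x - th i n)\<^sup>2 * PE i n x))"
    if "i \<in> {..<2}" for i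
    using int_D int_E that by auto
  show "integrable lborel (\<lambda>x. risk (d x) (\<lambda>i. est i x) (\<lambda>i n. PD i n x) (\<lambda>i n. PE i n x))"
    unfolding risk_eq_sum using int_SD int_SE by auto
  show "J_NP N th pr Dl PH lam mu d est PD PE
      = (LINT x|lborel. risk (d x) (\<lambda>i. est i x) (\<lambda>i n. PD i n x) (\<lambda>i n. PE i n x))"
    unfolding risk_eq_sum J_NP_def alpha_err_def beta_err_def using int_D int_E int_SD int_SE
    by (simp add: Bochner_Integration.integral_sum Bochner_Integration.integral_add integrable_mult_right)
qed

definition bayes_test :: "(nat \<Rightarrow> nat \<Rightarrow> 'a \<Rightarrow> real) \<Rightarrow> (nat \<Rightarrow> nat \<Rightarrow> 'a \<Rightarrow> real) \<Rightarrow> 'a \<Rightarrow> real" where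
  "bayes_test PD PE x =
     (if Dtil N th pr Dl PH lam mu 1 (\<lambda>i n. PD i n x) (\<lambda>i n. PE i n x)
         \<le> Dtil N th pr Dl PH lam mu 0 (\<lambda>i n. PD i n x) (\<lambda>i n. PE i n x) then 1 else 0)"

definition bayes_est :: "(nat \<Rightarrow> nat \<Rightarrow> 'a \<Rightarrow> real) \<Rightarrow> nat \<Rightarrow> 'a \<Rightarrow> real" where
  "bayes_est PE i x = post_mean (\<lambda>i n. PE i n x) i"

lemma risk_bayes_eq_rho_NP:
  "risk (bayes_test PD PE x) (\<lambda>i. bayes_est PE i x) (\<lambda>i n. PD i n x) (\<lambda>i n. PE i n x)
     = rho_NP N th pr Dl PH lam mu (\<lambda>i n. PD i n x) (\<lambda>i n. PE i n x)"
proof -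
  have "(\<lambda>i. bayes_est PE i x) = post_mean (\<lambda>i n. PE i n x)"
    unfolding bayes_est_def ..
  then show ?thesis
    unfolding bayes_test_def rho_NP_def by (simp add: risk_post_mean min_def)
qed

lemma post_mean_abs_le:
  assumes "i < 2" and "\<And>n. n < N i \<Longrightarrow> 0 \<le> s i n"
  shows "\<bar>post_mean s i\<bar> \<le> (\<Sum>n<N i. \<bar>th i n\<bar>)"
  unfolding post_mean_def marginal_def using assms cvec_nonneg
  by (intro weighted_mean_abs_le) (auto intro: member_le_sum sum_nonneg)

lemma Dtil_measurable:
  assumes "i < 2"
    and "\<And>i n. i < 2 \<Longrightarrow> n < N i \<Longrightarrow> PD i n \<in> borel_measurable M"
    and "\<And>i n. i < 2 \<Longrightarrow> n < N i \<Longrightarrow> PE i n \<in> borel_measurable M"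
  shows "(\<lambda>x. Dtil N th pr Dl PH lam mu i (\<lambda>i n. PD i n x) (\<lambda>i n. PE i n x)) \<in> borel_measurable M"
  using assms unfolding Dtil_def
  by (auto intro!: borel_measurable_add borel_measurable_diff borel_measurable_times
      borel_measurable_divide borel_measurable_sum borel_measurable_power)

lemma bayes_admissible:
  assumes dens: "\<And>i n. i < 2 \<Longrightarrow> n < N i \<Longrightarrow> is_density (PD i n) \<and> is_density (PE i n)"
  shows "admissible N th PD PE (bayes_test PD PE) (bayes_est PE)"
proof -
  have PD_meas: "PD i n \<in> borel_measurable lborel" and PE_meas: "PE i n \<in> borel_measurable lborel"
    and PD_int: "integrable lborel (PD i n)" and PE_int: "integrable lborel (PE i n)"
    and PE_nonneg: "\<And>x. 0 \<le> PE i n x"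
    if "i < 2" "n < N i" for i n
    using dens[OF that] unfolding is_density_def by auto
  have [measurable]: "(\<lambda>x. Dtil N th pr Dl PH lam mu i (\<lambda>i n. PD i n x) (\<lambda>i n. PE i n x))
      \<in> borel_measurable lborel" if "i < 2" for i
    using that PD_meas PE_meas by (rule Dtil_measurable)
  have test_meas: "bayes_test PD PE \<in> borel_measurable lborel"
    unfolding bayes_test_def by measurable
  have test_range: "0 \<le> bayes_test PD PE x \<and> bayes_test PD PE x \<le> 1" for x
    unfolding bayes_test_def by simp
  have est_meas: "bayes_est PE i \<in> borel_measurable lborel" if "i < 2" for i
    using that PE_meas unfolding bayes_est_def post_mean_def marginal_def
    by (auto intro!: borel_measurable_divide borel_measurable_sum borel_measurable_times)
  have acc_meas: "(\<lambda>x. acc (bayes_test PD PE) i x) \<in> borel_measurable lborel" for i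
    using test_meas unfolding acc_def by auto
  have acc_range: "0 \<le> acc (bayes_test PD PE) i x \<and> acc (bayes_test PD PE) i x \<le> 1" for i x
    using test_range[of x] unfolding acc_def by auto
  have sq_err_bound: "\<bar>(1 - acc (bayes_test PD PE) i x) * (bayes_est PE i x - th i n)\<^sup>2\<bar>
      \<le> ((\<Sum>m<N i. \<bar>th i m\<bar>) + \<bar>th i n\<bar>)\<^sup>2" if "i < 2" for i n x
  proof -
    have "\<bar>bayes_est PE i x - th i n\<bar> \<le> (\<Sum>m<N i. \<bar>th i m\<bar>) + \<bar>th i n\<bar>"
      using post_mean_abs_le[OF that, of "\<lambda>i n. PE i n x"] PE_nonneg that
      unfolding bayes_est_def by auto
    then have "(bayes_est PE i x - th i n)\<^sup>2 \<le> ((\<Sum>m<N i. \<bar>th i m\<bar>) + \<bar>th i n\<bar>)\<^sup>2"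
      by (metis abs_ge_zero power2_abs power_mono)
    moreover have "(1 - acc (bayes_test PD PE) i x) * (bayes_est PE i x - th i n)\<^sup>2
        \<le> (bayes_est PE i x - th i n)\<^sup>2"
      using acc_range[of i x] by (intro mult_left_le_one_le) auto
    ultimately show ?thesis
      using acc_range[of i x] by (simp add: abs_mult)
  qed
  show ?thesis
    unfolding admissible_def
  proof (intro conjI allI impI)
    fix i n assume "i < 2" "n < N i"
    then show "integrable lborel (\<lambda>x. acc (bayes_test PD PE) i x * PD i n x)"
      using PD_int acc_meas acc_range by (intro integrable_bounded_mult[where B = 1]) auto
    show "integrable lborel
        (\<lambda>x. (1 - acc (bayes_test PD PE) i x) * (bayes_est PE i x - th i n)\<^sup>2 * PE i n x)"
      using \<open>i < 2\<close> \<open>n < N i\<close> PE_int acc_meas est_meas sq_err_bound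
      by (intro integrable_bounded_mult) auto
  qed (use test_meas test_range est_meas in auto)
qed

lemma J_min_eq_D_rho_NP:
  assumes dens: "\<And>i n. i < 2 \<Longrightarrow> n < N i \<Longrightarrow> is_density (PD i n) \<and> is_density (PE i n)"
  shows "J_min N th pr Dl PH lam mu PD PE = D_rho_NP N th pr Dl PH lam mu PD PE"
proof -
  let ?rho = "\<lambda>x. rho_NP N th pr Dl PH lam mu (\<lambda>i n. PD i n x) (\<lambda>i n. PE i n x)"
  let ?J = "\<lambda>p. J_NP N th pr Dl PH lam mu (fst p) (snd p) PD PE"
  have bayes: "admissible N th PD PE (bayes_test PD PE) (bayes_est PE)"
    using dens by (rule bayes_admissible)
  have rho_int: "integrable lborel ?rho"
    and J_bayes: "J_NP N th pr Dl PH lam mu (bayes_test PD PE) (bayes_est PE) PD PE = (LINT x|lborel. ?rho x)"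
    using J_NP_eq_integral_risk[OF bayes] unfolding risk_bayes_eq_rho_NP by auto
  have J_ge: "(LINT x|lborel. ?rho x) \<le> J_NP N th pr Dl PH lam mu d est PD PE"
    if adm: "admissible N th PD PE d est" for d est
  proof -
    have "?rho x \<le> risk (d x) (\<lambda>i. est i x) (\<lambda>i n. PD i n x) (\<lambda>i n. PE i n x)" for x
      using adm dens unfolding admissible_def is_density_def by (intro rho_NP_le_risk) auto
    then show ?thesis
      unfolding J_NP_eq_integral_risk(2)[OF adm]
      using rho_int J_NP_eq_integral_risk(1)[OF adm] by (rule integral_mono[rotated 2])
  qed
  have "J_min N th pr Dl PH lam mu PD PE = (LINT x|lborel. ?rho x)"
    unfolding J_min_def
  proof (rule cInf_eq_minimum)
    show "(LINT x|lborel. ?rho x) \<in> ?J ` {(d, est). admissible N th PD PE d est}"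
      using bayes J_bayes by (intro image_eqI[of _ _ "(bayes_test PD PE, bayes_est PE)"]) auto
  qed (use J_ge in auto)
  then show ?thesis
    unfolding D_rho_NP_def .
qed

end

theorem corollary2:
  fixes N :: "nat \<Rightarrow> nat" and th pr :: "nat \<Rightarrow> nat \<Rightarrow> real" and Dl PH lam mu :: "nat \<Rightarrow> real"
    and U :: "nat \<Rightarrow> nat \<Rightarrow> ('a::euclidean_space \<Rightarrow> real) set"
    and QD QE :: "nat \<Rightarrow> nat \<Rightarrow> 'a \<Rightarrow> real"
  assumes PH_nonneg: "\<forall>i<2. 0 \<le> PH i" and PH_sum: "PH 0 + PH 1 = 1"
    and lam_nonneg: "\<forall>i<2. 0 \<le> lam i" and mu_nonneg: "\<forall>i<2. 0 \<le> mu i"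
    and N_pos: "\<forall>i<2. 1 \<le> N i"
    and Dl_pos: "\<forall>i<2. 0 < Dl i"
    and grid: "\<forall>i<2. \<forall>n. Suc n < N i \<longrightarrow> th i (Suc n) = th i n + Dl i"
    and prior_nonneg: "\<forall>i<2. \<forall>n<N i. 0 \<le> pr i n"
    and U_convex: "\<forall>i<2. \<forall>n<N i. convex_fun_set (U i n)"
    and U_dens: "\<forall>i<2. \<forall>n<N i. \<forall>p\<in>U i n. is_density p"
    and Q_in: "in_unc N U QD QE"
  shows "(\<forall>PD PE. in_unc N U PD PE \<longrightarrow>
            J_min N th pr Dl PH lam mu PD PE \<le> J_min N th pr Dl PH lam mu QD QE)
     \<longleftrightarrow> (\<forall>PD PE. in_unc N U PD PE \<longrightarrow>
            D_rho_NP N th pr Dl PH lam mu PD PE \<le> D_rho_NP N th pr Dl PH lam mu QD QE)"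
proof -
  interpret grid_cost N th pr Dl PH lam mu
    using PH_nonneg mu_nonneg Dl_pos prior_nonneg by unfold_locales auto
  have "J_min N th pr Dl PH lam mu PD PE = D_rho_NP N th pr Dl PH lam mu PD PE"
    if "in_unc N U PD PE" for PD PE :: "nat \<Rightarrow> nat \<Rightarrow> 'a \<Rightarrow> real"
    using that U_dens unfolding in_unc_def by (intro J_min_eq_D_rho_NP) auto
  then show ?thesis
    using Q_in by auto
qed

end
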